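(* Let $G$ be a finite Abelian group, let $S \subseteq G$ with $0 \notin S$, and let $\delta > 0$. If $\lambda(S) \geqslant (\delta - 1)|S|$, then $$\lambda\big(S \cup (-S)\big) \geqslant \Big(\frac{\delta}{2} - 1\Big)\,|S \cup (-S)|.$$
   Context: For $T \subseteq G$ with $0 \notin T$, $A(T)$ is the $G\times G$ $(0,1)$-matrix with $A(T)(x,y) = 1$ iff $y - x \in T$, and $\lambda(T) = \min\{\Re(\lambda) : A(T)v = \lambda v \text{ for some } v \neq \mathbf{0}\}$. The paper writes $\lambda(\mathcal{G}^*_S)$ for $\lambda(S\cup(-S))$, the smallest eigenvalue of the adjacency matrix $A(S\cup(-S))$ of the Cayley graph of $S$ (edges $xy$ with $x-y \in S$ or $y - x \in S$). *)

theory Defs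
  imports "HOL-Analysis.Analysis"
begin

definition adjA :: "('a::{ab_group_add,finite}) set \<Rightarrow> complex^('a::{ab_group_add,finite})^('a::{ab_group_add,finite})" where
  "adjA T = (\<chi> x y. if y - x \<in> T then 1 else 0)"

definition eigvalsA :: "'a::{ab_group_add,finite} set \<Rightarrow> complex set" where
  "eigvalsA T = {\<mu>. \<exists>v. v \<noteq> 0 \<and> adjA T *v v = \<mu> *s v}"

definition lam :: "'a::{ab_group_add,finite} set \<Rightarrow> real" where
  "lam T = Min (Re ` eigvalsA T)"

end

theory Submission
  imports Defs "HOL-Computational_Algebra.Fundamental_Theorem_Algebra"
begin

text \<open>All matrices \<open>A(T)\<close> are translation invariant and hence commute. So an eigenvector
  of \<open>A(S \<union> -S)\<close> for \<open>\<mu>\<close> may be taken to be an eigenvector \<open>w\<close> of \<open>A(S)\<close> as well, say for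
  \<open>\<nu>\<close>. Writing \<open>S \<union> -S\<close> as the disjoint union of \<open>S\<close> and \<open>N = -S - S\<close>, the quadratic form
  gives \<open>Re \<mu> |w|\<^sup>2 = Re \<nu> |w|\<^sup>2 + Re \<langle>w, A(N) w\<rangle>\<close>, and \<open>A(N) w\<close> is a sum of \<open>|N|\<close>
  translates of \<open>w\<close>, so Cauchy-Schwarz yields \<open>Re \<mu> \<ge> \<lambda>(S) - |N|\<close>. Since \<open>|N| \<le> |S|\<close>,
  this is at least \<open>(\<delta>/2 - 1)(|S| + |N|)\<close>. The common eigenvector, as well as existence and
  finiteness of eigenvalues, come from annihilating polynomials and the fundamental theorem
  of algebra.\<close>

text \<open>\<open>poly_mat_vec p M v\<close> is \<open>p(M) v\<close>, computed by Horner's scheme.\<close>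

definition poly_mat_vec :: "complex poly \<Rightarrow> complex^'n^'n \<Rightarrow> complex^'n \<Rightarrow> complex^'n" where
  "poly_mat_vec p M = fold_coeffs (\<lambda>a g v. a *s v + M *v g v) p (\<lambda>v. 0)"

lemma poly_mat_vec_0 [simp]: "poly_mat_vec 0 M v = 0"
  by (simp add: poly_mat_vec_def)

lemma poly_mat_vec_pCons [simp]: "poly_mat_vec (pCons a p) M v = a *s v + M *v poly_mat_vec p M v"
  by (cases "p = 0"; cases "a = 0"; simp add: poly_mat_vec_def)

lemma poly_mat_vec_add [simp]: "poly_mat_vec (p + q) M v = poly_mat_vec p M v + poly_mat_vec q M v"
proof (induction p arbitrary: q)
  case (pCons a p)
  then show ?case
    by (cases q) (simp add: matrix_vector_right_distrib vector_sadd_rdistrib algebra_simps)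
qed simp

lemma poly_mat_vec_smult [simp]: "poly_mat_vec (smult c p) M v = c *s poly_mat_vec p M v"
  by (induction p) (simp_all add: vector_scalar_commute vector_add_ldistrib vector_smult_assoc mult.commute)

lemma poly_mat_vec_mult: "poly_mat_vec (p * q) M v = poly_mat_vec p M (poly_mat_vec q M v)"
  by (induction p arbitrary: v) (simp_all add: mult_pCons_left)

lemma poly_mat_vec_sum: "poly_mat_vec (\<Sum>i\<in>A. f i) M v = (\<Sum>i\<in>A. poly_mat_vec (f i) M v)"
  by (induction A rule: infinite_finite_induct) simp_all

lemma poly_mat_vec_monom: "poly_mat_vec (monom a k) M v = a *s (((*v) M) ^^ k) v"
  by (induction k) (simp_all add: monom_Suc vector_scalar_commute monom_0)

lemma poly_mat_vec_0_right [simp]: "poly_mat_vec p M 0 = 0"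
  by (induction p) simp_all

lemma poly_mat_vec_add_right: "poly_mat_vec p M (x + y) = poly_mat_vec p M x + poly_mat_vec p M y"
  by (induction p) (simp_all add: matrix_vector_right_distrib vector_add_ldistrib algebra_simps)

lemma poly_mat_vec_scale_right: "poly_mat_vec p M (c *s x) = c *s poly_mat_vec p M x"
  by (induction p) (simp_all add: vector_scalar_commute vector_add_ldistrib vector_smult_assoc mult.commute)

lemma poly_mat_vec_sum_right: "poly_mat_vec p M (\<Sum>i\<in>A. f i) = (\<Sum>i\<in>A. poly_mat_vec p M (f i))"
  by (induction A rule: infinite_finite_induct) (simp_all add: poly_mat_vec_add_right)

lemma poly_mat_vec_eigenvector:
  "M *v v = \<mu> *s v \<Longrightarrow> poly_mat_vec p M v = poly p \<mu> *s v"
  by (induction p) (simp_all add: vector_scalar_commute vector_smult_assoc vector_sadd_rdistrib mult.commute)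

lemma real_family_dependent:
  fixes K :: "nat \<Rightarrow> 'v::euclidean_space"
  obtains c where "\<exists>k\<le>DIM('v). c k \<noteq> 0" "(\<Sum>k\<le>DIM('v). c k *\<^sub>R K k) = 0"
proof (cases "inj_on K {..DIM('v)}")
  case True
  let ?F = "K ` {..DIM('v)}"
  have "card ?F = Suc DIM('v)" using True by (simp add: card_image)
  then have "dependent ?F" by (intro dependent_biggerset) simp
  then obtain u where u: "\<exists>w\<in>?F. u w \<noteq> 0" "(\<Sum>w\<in>?F. u w *\<^sub>R w) = 0"
    using dependent_finite[of ?F] by auto
  have "(\<Sum>k\<le>DIM('v). u (K k) *\<^sub>R K k) = 0"
    using u(2) sum.reindex[OF True, of "\<lambda>w. u w *\<^sub>R w"] by simp
  moreover have "\<exists>k\<le>DIM('v). u (K k) \<noteq> 0" using u(1) by auto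
  ultimately show ?thesis by (intro that)
next
  case False
  then obtain j k where jk: "j \<le> DIM('v)" "k \<le> DIM('v)" "j \<noteq> k" "K j = K k"
    unfolding inj_on_def by auto
  let ?c = "\<lambda>i. (if i = j then 1 else 0) - (if i = k then 1 else (0::real))"
  have "?c i *\<^sub>R K i = (if i = j then K i else 0) - (if i = k then K i else 0)" for i
    by simp
  then have "(\<Sum>i\<le>DIM('v). ?c i *\<^sub>R K i) = 0"
    using jk by (simp add: sum_subtractf)
  then show ?thesis using jk by (intro that[of ?c]) auto
qed

text \<open>\<open>complex^'n\<close> is a vector space over the reals only, so the dependency among the
  vectors \<open>M\<^sup>k v\<close> is found with real coefficients and dimension \<open>2 CARD('n)\<close>.\<close>

lemma exists_annihilating_poly:
  fixes M :: "complex^'n^'n"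
  shows "\<exists>p. p \<noteq> 0 \<and> poly_mat_vec p M v = 0"
proof -
  let ?N = "DIM(complex^'n)"
  obtain c where c: "\<exists>k\<le>?N. c k \<noteq> 0" "(\<Sum>k\<le>?N. c k *\<^sub>R (((*v) M) ^^ k) v) = 0"
    by (rule real_family_dependent)
  define p where "p = (\<Sum>k\<le>?N. monom (complex_of_real (c k)) k)"
  have "coeff p k = c k" if "k \<le> ?N" for k
    using that by (simp add: p_def coeff_sum coeff_monom)
  then have "p \<noteq> 0" using c(1) by force
  moreover have "complex_of_real r *s x = r *\<^sub>R x" for r and x :: "complex^'n"
  proof -
    have "(r *\<^sub>R x) $ i = complex_of_real r * x $ i" for i
      using scaleR_conv_of_real[of r "x $ i"] by simp
    then show ?thesis by (simp add: vec_eq_iff)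
  qed
  then have "poly_mat_vec p M v = 0"
    using c(2) by (simp add: p_def poly_mat_vec_sum poly_mat_vec_monom)
  ultimately show ?thesis by blast
qed

lemma eigenvector_in_commuting_eigenspace:
  fixes M B :: "complex^'n^'n"
  assumes comm: "\<And>x. B *v (M *v x) = M *v (B *v x)"
    and "B *v v = \<mu> *s v" "v \<noteq> 0" "p \<noteq> 0" "poly_mat_vec p M v = 0"
  shows "\<exists>w \<nu>. w \<noteq> 0 \<and> B *v w = \<mu> *s w \<and> M *v w = \<nu> *s w"
  using assms(2-)
proof (induction "degree p" arbitrary: p v rule: less_induct)
  case less
  have "degree p \<noteq> 0"
  proof
    assume "degree p = 0"
    then obtain c where "p = [:c:]" by (metis degree_eq_zeroE)
    with less.prems(2-4) show False by simp
  qed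
  then obtain r where "poly p r = 0"
    using fundamental_theorem_of_algebra constant_degree by metis
  then have "[:-r, 1:] dvd p" by (simp add: dvd_iff_poly_eq_0)
  then obtain q where pq: "p = q * [:-r, 1:]" by (metis dvd_def mult.commute)
  have "q \<noteq> 0" using pq less.prems(3) by auto
  then have "degree q < degree p" using pq degree_mult_eq[of q "[:-r, 1:]"] by simp
  \<comment> \<open>either \<open>v\<close> is an eigenvector of \<open>M\<close> for \<open>r\<close>, or \<open>(M - r) v\<close> lies in the
    \<open>\<mu>\<close>-eigenspace of \<open>B\<close> and is annihilated by the polynomial \<open>q\<close> of smaller degree\<close>
  define v' where "v' = M *v v - r *s v"
  show ?case
  proof (cases "v' = 0")
    case True
    then have "M *v v = r *s v" by (simp add: v'_def)
    then show ?thesis using less.prems(1,2) by blast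
  next
    case False
    have "B *v v' = \<mu> *s v'"
      by (simp add: v'_def matrix_vector_mult_diff_distrib vector_scalar_commute comm less.prems(1)
          vector_ssub_ldistrib vector_smult_assoc mult.commute)
    moreover have "poly_mat_vec q M v' = 0"
    proof -
      have "poly_mat_vec [:-r, 1:] M v = v'"
        by (simp add: v'_def vector_smult_lneg)
      then show ?thesis
        using less.prems(4) by (simp only: pq poly_mat_vec_mult)
    qed
    ultimately show ?thesis
      using less.hyps[OF \<open>degree q < degree p\<close> _ False \<open>q \<noteq> 0\<close>] by simp
  qed
qed

lemma commuting_common_eigenvector:
  fixes M B :: "complex^'n^'n"
  assumes "\<And>x. B *v (M *v x) = M *v (B *v x)" and "B *v v = \<mu> *s v" "v \<noteq> 0"
  shows "\<exists>w \<nu>. w \<noteq> 0 \<and> B *v w = \<mu> *s w \<and> M *v w = \<nu> *s w"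
  using exists_annihilating_poly[of M v] eigenvector_in_commuting_eigenspace[OF assms] by blast

lemma eigenvector_exists:
  fixes M :: "complex^'n^'n"
  shows "\<exists>\<nu> w. w \<noteq> 0 \<and> M *v w = \<nu> *s w"
  using commuting_common_eigenvector[of "mat 1" M "axis i 1" 1] by (auto simp: axis_eq_0_iff)

lemma finite_eigenvalues:
  fixes M :: "complex^'n^'n"
  shows "finite {\<mu>. \<exists>v. v \<noteq> 0 \<and> M *v v = \<mu> *s v}"
proof -
  have "\<forall>i. \<exists>p. p \<noteq> 0 \<and> poly_mat_vec p M (axis i 1) = 0"
    using exists_annihilating_poly by blast
  then obtain P where P: "\<And>i. P i \<noteq> 0" "\<And>i. poly_mat_vec (P i) M (axis i 1) = 0"
    by metis
  define q where "q = (\<Prod>i\<in>UNIV. P i)"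
  have "q \<noteq> 0" using P(1) by (simp add: q_def)
  have q_axis: "poly_mat_vec q M (axis i 1) = 0" for i
  proof -
    have "q = (\<Prod>j\<in>UNIV-{i}. P j) * P i" by (simp add: q_def prod.remove mult.commute)
    then show ?thesis by (simp add: poly_mat_vec_mult P(2))
  qed
  have q_all: "poly_mat_vec q M x = 0" for x
  proof -
    have "poly_mat_vec q M x = poly_mat_vec q M (\<Sum>i\<in>UNIV. x $ i *s axis i 1)"
      by (simp add: basis_expansion)
    also have "\<dots> = 0"
      by (simp add: poly_mat_vec_sum_right poly_mat_vec_scale_right q_axis)
    finally show ?thesis .
  qed
  have "{\<mu>. \<exists>v. v \<noteq> 0 \<and> M *v v = \<mu> *s v} \<subseteq> {x. poly q x = 0}"
    using poly_mat_vec_eigenvector[of M _ _ q] q_all by (auto simp: vec_eq_iff)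
  then show ?thesis using poly_roots_finite[OF \<open>q \<noteq> 0\<close>] finite_subset by blast
qed

lemma lam_le_Re_eigenvalue:
  assumes "\<mu> \<in> eigvalsA T" shows "lam T \<le> Re \<mu>"
  unfolding lam_def using assms finite_eigenvalues[of "adjA T"] by (intro Min_le) (auto simp: eigvalsA_def)

lemma lam_geI:
  assumes "\<And>\<mu>. \<mu> \<in> eigvalsA T \<Longrightarrow> b \<le> Re \<mu>" shows "b \<le> lam T"
proof -
  have "finite (eigvalsA T)" "eigvalsA T \<noteq> {}"
    using finite_eigenvalues[of "adjA T"] eigenvector_exists[of "adjA T"] by (auto simp: eigvalsA_def)
  then show ?thesis unfolding lam_def using assms by (subst Min_ge_iff) auto
qed


lemma adjA_mult_vec_nth:
  fixes T :: "'a::{ab_group_add,finite} set"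
  shows "(adjA T *v x) $ z = (\<Sum>t\<in>T. x $ (z + t))"
proof -
  have "(adjA T *v x) $ z = (\<Sum>y\<in>UNIV. if y - z \<in> T then x $ y else 0)"
    unfolding adjA_def matrix_vector_mult_def by (auto intro!: sum.cong)
  also have "\<dots> = (\<Sum>t\<in>UNIV. if t \<in> T then x $ (z + t) else 0)"
    by (rule sum.reindex_bij_witness[of _ "\<lambda>t. z + t" "\<lambda>y. y - z"]) auto
  also have "\<dots> = (\<Sum>t\<in>T. x $ (z + t))"
    by (simp add: sum.inter_restrict[symmetric])
  finally show ?thesis .
qed

lemma adjA_commute:
  fixes T T' :: "'a::{ab_group_add,finite} set"
  shows "adjA T *v (adjA T' *v x) = adjA T' *v (adjA T *v x)"
proof -
  have "(\<Sum>t\<in>T. \<Sum>t'\<in>T'. x $ (z + t + t')) = (\<Sum>t'\<in>T'. \<Sum>t\<in>T. x $ (z + t' + t))" for z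
    by (subst sum.swap) (simp add: algebra_simps)
  then show ?thesis by (simp add: vec_eq_iff adjA_mult_vec_nth)
qed

lemma adjA_Un_disjoint:
  fixes S N :: "'a::{ab_group_add,finite} set"
  assumes "S \<inter> N = {}"
  shows "adjA (S \<union> N) *v x = adjA S *v x + adjA N *v x"
  using assms by (simp add: vec_eq_iff adjA_mult_vec_nth sum.union_disjoint)

text \<open>On \<open>complex^'n\<close>, \<open>inner x y\<close> is the real part of the Hermitian product \<open>\<langle>x, y\<rangle>\<close>.\<close>

lemma inner_scale_self:
  fixes x :: "complex^'n"
  shows "inner x (c *s x) = Re c * (norm x)\<^sup>2"
proof -
  have "inner z (c * z) = Re c * (norm z)\<^sup>2" for z :: complex
    unfolding inner_complex_def cmod_power2 by (simp add: algebra_simps power2_eq_square)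
  then show ?thesis
    by (simp add: inner_vec_def norm_vec_def L2_set_def sum_nonneg sum_distrib_left)
qed

lemma norm_translate:
  fixes x :: "complex^('a::{ab_group_add,finite})"
  shows "norm (\<chi> z. x $ (z + t)) = norm x"
proof -
  have "(\<Sum>z\<in>UNIV. (norm (x $ (z + t)))\<^sup>2) = (\<Sum>z\<in>UNIV. (norm (x $ z))\<^sup>2)"
    by (rule sum.reindex_bij_witness[of _ "\<lambda>z. z - t" "\<lambda>z. z + t"]) auto
  then show ?thesis by (simp add: norm_vec_def L2_set_def)
qed

lemma inner_adjA_ge:
  fixes N :: "'a::{ab_group_add,finite} set" and w :: "complex^('a::{ab_group_add,finite})"
  shows "inner w (adjA N *v w) \<ge> - real (card N) * (norm w)\<^sup>2"
proof -
  have "adjA N *v w = (\<Sum>t\<in>N. \<chi> z. w $ (z + t))"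
    by (simp add: vec_eq_iff adjA_mult_vec_nth)
  then have "inner w (adjA N *v w) = (\<Sum>t\<in>N. inner w (\<chi> z. w $ (z + t)))"
    by (simp add: inner_sum_right)
  also have "\<dots> \<ge> (\<Sum>t\<in>N. - (norm w)\<^sup>2)"
  proof (rule sum_mono)
    fix t
    have "\<bar>inner w (\<chi> z. w $ (z + t))\<bar> \<le> norm w * norm w"
      using Cauchy_Schwarz_ineq2[of w "\<chi> z. w $ (z + t)"] by (simp add: norm_translate)
    then show "- (norm w)\<^sup>2 \<le> inner w (\<chi> z. w $ (z + t))"
      by (simp add: power2_eq_square)
  qed
  finally show ?thesis by simp
qed

lemma lam_Un_disjoint_ge:
  fixes S N :: "'a::{ab_group_add,finite} set"
  assumes "S \<inter> N = {}"
  shows "lam S - real (card N) \<le> lam (S \<union> N)"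
proof (rule lam_geI)
  fix \<mu> assume "\<mu> \<in> eigvalsA (S \<union> N)"
  then obtain v where v: "v \<noteq> 0" "adjA (S \<union> N) *v v = \<mu> *s v" by (auto simp: eigvalsA_def)
  then obtain w \<nu> where w: "w \<noteq> 0" "adjA (S \<union> N) *v w = \<mu> *s w" "adjA S *v w = \<nu> *s w"
    using commuting_common_eigenvector[OF adjA_commute] by blast
  have "lam S \<le> Re \<nu>"
    using w by (intro lam_le_Re_eigenvalue) (auto simp: eigvalsA_def)
  have "Re \<mu> * (norm w)\<^sup>2 = inner w (adjA (S \<union> N) *v w)"
    by (simp add: w(2) inner_scale_self)
  also have "\<dots> = Re \<nu> * (norm w)\<^sup>2 + inner w (adjA N *v w)"
    by (simp add: adjA_Un_disjoint[OF assms] w(3) inner_add_right inner_scale_self)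
  also have "\<dots> \<ge> (Re \<nu> - real (card N)) * (norm w)\<^sup>2"
    using inner_adjA_ge[of N w] by (simp add: algebra_simps)
  finally have "Re \<nu> - real (card N) \<le> Re \<mu>"
    using w(1) by simp
  then show "lam S - real (card N) \<le> Re \<mu>"
    using \<open>lam S \<le> Re \<nu>\<close> by linarith
qed

theorem lemma7p13:
  fixes S :: "'a::{ab_group_add,finite} set" and \<delta> :: real
  assumes "0 \<notin> S" and "\<delta> > 0"
    and "lam S \<ge> (\<delta> - 1) * real (card S)"
  shows "lam (S \<union> uminus ` S) \<ge> (\<delta> / 2 - 1) * real (card (S \<union> uminus ` S))"
proof -
  define N where "N = uminus ` S - S"
  have U: "S \<union> uminus ` S = S \<union> N" and "S \<inter> N = {}" by (auto simp: N_def)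
  then have card_U: "card (S \<union> uminus ` S) = card S + card N" by (simp add: card_Un_disjoint)
  have "card N \<le> card S"
    unfolding N_def using card_mono[of "uminus ` S" "uminus ` S - S"] card_image_le[of S uminus] by auto
  then have "(\<delta> / 2 - 1) * real (card (S \<union> uminus ` S)) \<le> (\<delta> - 1) * real (card S) - real (card N)"
    using assms(2) by (simp add: card_U field_simps)
  also have "\<dots> \<le> lam (S \<union> uminus ` S)"
    using assms(3) lam_Un_disjoint_ge[OF \<open>S \<inter> N = {}\<close>] by (simp add: U)
  finally show ?thesis .
qed

end
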